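(* Consider a unit dual quaternion $\underline{\boldsymbol{x}}=\boldsymbol{r}+\varepsilon\frac{1}{2}\boldsymbol{p}\boldsymbol{r}$, with $\boldsymbol{r}\in\mathbb{S}^{3}$ and $\boldsymbol{p}\in\mathbb{H}_{p}$. Then \[ \operatorname{vec}_{8}\dot{\underline{\boldsymbol{x}}}=\underbrace{\begin{bmatrix}\boldsymbol{Q}\left(\boldsymbol{r}\right) & \boldsymbol{0}_{4\times3}\\ \frac{1}{2}\overset{+}{\boldsymbol{H}}_{4}\left(\boldsymbol{p}\right)\boldsymbol{Q}\left(\boldsymbol{r}\right) & \overset{-}{\boldsymbol{H}}_{4}\left(\boldsymbol{r}\right)\boldsymbol{Q}_{p} \end{bmatrix}}_{\boldsymbol{Q}_{8}\left(\underline{\boldsymbol{x}}\right)}\operatorname{vec}_{6}\dot{\underline{\boldsymbol{y}}}, \] where $\boldsymbol{Q}\left(\boldsymbol{r}\right)=\frac{\partial\operatorname{vec}_{4}\boldsymbol{r}}{\partial\operatorname{vec}_{3}\boldsymbol{y}}$ with $\boldsymbol{y}=\log\boldsymbol{r}$, $\boldsymbol{Q}_{p}=\begin{bmatrix}\boldsymbol{0}_{1\times3}\\ \boldsymbol{I}_{3}\end{bmatrix}$, and $\underline{\boldsymbol{y}}=\log\underline{\boldsymbol{x}}$. Furthermore, $\boldsymbol{Q}_{8}\left(\underline{\boldsymbol{x}}\right)\in\mathbb{R}^{8\times6}$ has full column rank; therefore $\boldsymbol{Q}_{8}\left(\underline{\boldsymbol{x}}\right)^{+}\boldsymbol{Q}_{8}\left(\underline{\boldsymbol{x}}\right)=\boldsymbol{I}$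 (with $\boldsymbol{Q}_8^{+}=(\boldsymbol{Q}_8^T\boldsymbol{Q}_8)^{-1}\boldsymbol{Q}_8^T$) and $\operatorname{vec}_{8}\dot{\underline{\boldsymbol{x}}}=\boldsymbol{0}$ if and only if $\operatorname{vec}_{6}\dot{\underline{\boldsymbol{y}}}=\boldsymbol{0}$.
   Context: Quaternions are $\boldsymbol{h}=h_{1}+\hat{\imath}h_{2}+\hat{\jmath}h_{3}+\hat{k}h_{4}$ with $\hat{\imath}^{2}=\hat{\jmath}^{2}=\hat{k}^{2}=\hat{\imath}\hat{\jmath}\hat{k}=-1$; $\mathbb{H}_p$ is the set of pure quaternions (zero real part), $\mathbb{S}^3$ the unit-norm quaternions. Dual quaternions are $\underline{\boldsymbol{h}}=\boldsymbol{h}+\varepsilon\boldsymbol{h}'$ with $\varepsilon^{2}=0$, $\varepsilon\neq0$. $\operatorname{vec}_{4}\boldsymbol{h}=[h_1\ h_2\ h_3\ h_4]^T$, $\operatorname{vec}_{8}\underline{\boldsymbol{h}}=[\operatorname{vec}_4\boldsymbol{h}^T\ \operatorname{vec}_4\boldsymbol{h}'^T]^T$; for a pure quaternion $\operatorname{vec}_3$ gives its three imaginary coefficients, and for a pure dual quaternion $\underline{\boldsymbol{h}}=h_{1}\hat{\imath}+h_{2}\hat{\jmath}+h_{3}\hat{k}+\varepsilon(h_{4}\hat{\imath}+h_{5}\hat{\jmath}+h_{6}\hat{k})$, $\operatorname{vec}_6\underline{\boldsymbol{h}}=[h_1\cdots h_6]^T$. The Hamilton operators satisfy $\operatorname{vec}_4(\boldsymbol{h}_1\boldsymbol{h}_2)=\overset{+}{\boldsymbol{H}}_4(\boldsymbol{h}_1)\operatorname{vec}_4\boldsymbol{h}_2=\overset{-}{\boldsymbol{H}}_4(\boldsymbol{h}_2)\operatorname{vec}_4\boldsymbol{h}_1$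 and are $\overset{+}{\boldsymbol{H}}_{4}(\boldsymbol{h})=\begin{bmatrix}h_{1} & -h_{2} & -h_{3} & -h_{4}\\ h_{2} & h_{1} & -h_{4} & h_{3}\\ h_{3} & h_{4} & h_{1} & -h_{2}\\ h_{4} & -h_{3} & h_{2} & h_{1}\end{bmatrix}$, $\overset{-}{\boldsymbol{H}}_{4}(\boldsymbol{h})=\begin{bmatrix}h_{1} & -h_{2} & -h_{3} & -h_{4}\\ h_{2} & h_{1} & h_{4} & -h_{3}\\ h_{3} & -h_{4} & h_{1} & h_{2}\\ h_{4} & h_{3} & -h_{2} & h_{1}\end{bmatrix}$. Write $\boldsymbol{r}=r_1+r_2\hat{\imath}+r_3\hat{\jmath}+r_4\hat{k}=\cos(\phi/2)+\boldsymbol{n}\sin(\phi/2)$ with $\boldsymbol{n}=n_x\hat{\imath}+n_y\hat{\jmath}+n_z\hat{k}$ a unit pure quaternion and $\phi\in[0,2\pi)$; $\log\boldsymbol{r}=\frac{\phi}{2}\boldsymbol{n}$ and $\log\underline{\boldsymbol{x}}=\frac{1}{2}(\phi\boldsymbol{n}+\varepsilon\boldsymbol{p})$. Explicitly, $\boldsymbol{Q}(\boldsymbol{r})=\begin{bmatrix}-r_{2} & -r_{3} & -r_{4}\\ \Gamma n_{x}^{2}+\Theta & \Gamma n_{x}n_{y} & \Gamma n_{x}n_{z}\\ \Gamma n_{y}n_{x} & \Gamma n_{y}^{2}+\Theta & \Gamma n_{y}n_{z}\\ \Gamma n_{z}n_{x} & \Gamma n_{z}n_{y} & \Gamma n_{z}^{2}+\Theta\end{bmatrix}$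 with $\Gamma=r_1-\Theta$, $\Theta=\frac{\sin(\phi/2)}{\phi/2}$ for $\phi\neq0$ and $\Theta=1$ for $\phi=0$. *)

theory Defs
  imports "HOL-Analysis.Analysis"
begin

text \<open>Quaternions h = h1 + i h2 + j h3 + k h4 are represented by their coefficient vector
  vec4 h :: real^4 (components \<open>h$1 .. h$4\<close>). Hence vec4 is the identity.
  Dual quaternions h + eps h' are represented as pairs (h, h').\<close>

type_synonym quat = "real^4"
type_synonym dquat = "quat \<times> quat"

definition qmk :: "real \<Rightarrow> real \<Rightarrow> real \<Rightarrow> real \<Rightarrow> quat" where
  "qmk a b c d = vector [a, b, c, d]"

definition qmult :: "quat \<Rightarrow> quat \<Rightarrow> quat" where
  "qmult h g = qmk
     (h$1*g$1 - h$2*g$2 - h$3*g$3 - h$4*g$4)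
     (h$1*g$2 + h$2*g$1 + h$3*g$4 - h$4*g$3)
     (h$1*g$3 - h$2*g$4 + h$3*g$1 + h$4*g$2)
     (h$1*g$4 + h$2*g$3 - h$3*g$2 + h$4*g$1)"

definition qconj :: "quat \<Rightarrow> quat" where
  "qconj h = qmk (h$1) (- h$2) (- h$3) (- h$4)"

definition is_pure :: "quat \<Rightarrow> bool" where
  "is_pure h \<longleftrightarrow> h$1 = 0"

definition is_unit_quat :: "quat \<Rightarrow> bool" where
  "is_unit_quat h \<longleftrightarrow> norm h = 1"

definition dq_of :: "quat \<Rightarrow> quat \<Rightarrow> dquat" where
  "dq_of r p = (r, (1/2) *\<^sub>R qmult p r)"

definition vec8 :: "dquat \<Rightarrow> real^8" where
  "vec8 x = vector [fst x $1, fst x $2, fst x $3, fst x $4,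
                    snd x $1, snd x $2, snd x $3, snd x $4]"

definition vec6 :: "dquat \<Rightarrow> real^6" where
  "vec6 x = vector [fst x $2, fst x $3, fst x $4, snd x $2, snd x $3, snd x $4]"

text \<open>Angle phi in [0, 2pi] and axis n of r = cos(phi/2) + n sin(phi/2).
  When the imaginary part vanishes the axis is irrelevant; we pick i.\<close>
definition qphi :: "quat \<Rightarrow> real" where
  "qphi r = 2 * arccos (r$1)"

definition qaxis :: "quat \<Rightarrow> quat" where
  "qaxis r = (let v = qmk 0 (r$2) (r$3) (r$4) in
              if v = 0 then qmk 0 1 0 0 else (1 / norm v) *\<^sub>R v)"

definition qlog :: "quat \<Rightarrow> quat" where
  "qlog r = (qphi r / 2) *\<^sub>R qaxis r"

text \<open>log x = (1/2)(phi n + eps p) for x = r + eps (1/2) p r, where p = 2 x' r^* .\<close>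
definition dq_log :: "dquat \<Rightarrow> dquat" where
  "dq_log x = (qlog (fst x), (1/2) *\<^sub>R (2 *\<^sub>R qmult (snd x) (qconj (fst x))))"

definition Hplus4 :: "quat \<Rightarrow> real^4^4" where
  "Hplus4 h = vector [
     vector [h$1, - h$2, - h$3, - h$4],
     vector [h$2,   h$1, - h$4,   h$3],
     vector [h$3,   h$4,   h$1, - h$2],
     vector [h$4, - h$3,   h$2,   h$1]]"

definition Hminus4 :: "quat \<Rightarrow> real^4^4" where
  "Hminus4 h = vector [
     vector [h$1, - h$2, - h$3, - h$4],
     vector [h$2,   h$1,   h$4, - h$3],
     vector [h$3, - h$4,   h$1,   h$2],
     vector [h$4,   h$3, - h$2,   h$1]]"

definition Theta :: "quat \<Rightarrow> real" where
  "Theta r = (if qphi r = 0 then 1 else sin (qphi r / 2) / (qphi r / 2))"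

definition Gamma :: "quat \<Rightarrow> real" where
  "Gamma r = r$1 - Theta r"

text \<open>Q(r) = d vec4 r / d vec3 y, y = log r, given explicitly as in the paper.\<close>
definition Qr :: "quat \<Rightarrow> real^3^4" where
  "Qr r = (let n = qaxis r; G = Gamma r; T = Theta r;
               nx = n$2; ny = n$3; nz = n$4 in
     vector [
       vector [- r$2, - r$3, - r$4],
       vector [G*nx*nx + T, G*nx*ny, G*nx*nz],
       vector [G*ny*nx, G*ny*ny + T, G*ny*nz],
       vector [G*nz*nx, G*nz*ny, G*nz*nz + T]])"

definition Qp :: "real^3^4" where
  "Qp = vector [vector [0, 0, 0], vector [1, 0, 0], vector [0, 1, 0], vector [0, 0, 1]]"

definition blk_row :: "real^3 \<Rightarrow> real^3 \<Rightarrow> real^6" where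
  "blk_row a b = vector [a$1, a$2, a$3, b$1, b$2, b$3]"

definition block2x2 :: "real^3^4 \<Rightarrow> real^3^4 \<Rightarrow> real^3^4 \<Rightarrow> real^3^4 \<Rightarrow> real^6^8" where
  "block2x2 A B C D = vector [
     blk_row (A$1) (B$1), blk_row (A$2) (B$2), blk_row (A$3) (B$3), blk_row (A$4) (B$4),
     blk_row (C$1) (D$1), blk_row (C$2) (D$2), blk_row (C$3) (D$3), blk_row (C$4) (D$4)]"

text \<open>Q8(x) for x = r + eps (1/2) p r; p is recovered as p = 2 x' r^* .\<close>
definition Q8 :: "dquat \<Rightarrow> real^6^8" where
  "Q8 x = (let r = fst x; p = 2 *\<^sub>R qmult (snd x) (qconj r) in
     block2x2 (Qr r) 0 ((1/2) *\<^sub>R (Hplus4 p ** Qr r)) (Hminus4 r ** Qp))"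

definition pinv :: "real^'n^'m \<Rightarrow> real^'m^'n" where
  "pinv A = matrix_inv (transpose A ** A) ** transpose A"

end

theory Submission
  imports Defs
begin

text \<open>
  A unit quaternion r other than -1 is the exponential of y = vec3 (log r): with \<theta> = |y| and
  n = y / \<theta> one has r = cos \<theta> + sinc \<theta> y and 0 \<le> \<theta> < \<pi>. Differentiating this formula
  along the curve y(t) gives r' = Q(r) y'. At \<theta> = 0 the factor sinc \<theta> is only used as a
  continuous function, and the scalar part is controlled by |cos \<theta> - 1| \<le> \<theta>^2/2. The dual
  part (1/2) p r is bilinear in p and r, so the product rule yields the lower block row of Q8.

  For the rank: Q(r) e = 0 forces sin \<theta> (n \<bullet> e) = 0 in the scalar row, hence n \<bullet> e = 0 and
  then sinc \<theta> e = 0, i.e. e = 0; right multiplication by the unit quaternion r is injective.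
  So Q8 has trivial kernel, which gives full column rank and the left inverse (Q8^T Q8)^-1 Q8^T.
\<close>

section \<open>Vectors and matrices of small dimension\<close>

lemma exhaust_6:
  fixes x :: 6
  shows "x = 1 \<or> x = 2 \<or> x = 3 \<or> x = 4 \<or> x = 5 \<or> x = 6"
proof (induct x)
  case (of_int z)
  then have "z = 0 \<or> z = 1 \<or> z = 2 \<or> z = 3 \<or> z = 4 \<or> z = 5" by fastforce
  then show ?case by auto
qed

lemma exhaust_8:
  fixes x :: 8
  shows "x = 1 \<or> x = 2 \<or> x = 3 \<or> x = 4 \<or> x = 5 \<or> x = 6 \<or> x = 7 \<or> x = 8"
proof (induct x)
  case (of_int z)
  then have "z = 0 \<or> z = 1 \<or> z = 2 \<or> z = 3 \<or> z = 4 \<or> z = 5 \<or> z = 6 \<or> z = 7" by fastforce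
  then show ?case by auto
qed

lemma forall_6: "(\<forall>i::6. P i) \<longleftrightarrow> P 1 \<and> P 2 \<and> P 3 \<and> P 4 \<and> P 5 \<and> P 6"
  by (metis exhaust_6)

lemma forall_8: "(\<forall>i::8. P i) \<longleftrightarrow> P 1 \<and> P 2 \<and> P 3 \<and> P 4 \<and> P 5 \<and> P 6 \<and> P 7 \<and> P 8"
  by (metis exhaust_8)

lemma sum_6: "sum f (UNIV::6 set) = f 1 + f 2 + f 3 + f 4 + f 5 + f 6"
proof -
  have "UNIV = {1, 2, 3, 4, 5, 6::6}"
    using exhaust_6 by auto
  then show ?thesis
    unfolding \<open>UNIV = _\<close> by (simp add: ac_simps)
qed

lemma vector_4 [simp]:
  "(vector [x1, x2, x3, x4] :: 'a::zero^4) $ 1 = x1"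
  "(vector [x1, x2, x3, x4] :: 'a::zero^4) $ 2 = x2"
  "(vector [x1, x2, x3, x4] :: 'a::zero^4) $ 3 = x3"
  "(vector [x1, x2, x3, x4] :: 'a::zero^4) $ 4 = x4"
  unfolding vector_def by simp_all

lemma vector_6 [simp]:
  "(vector [x1, x2, x3, x4, x5, x6] :: 'a::zero^6) $ 1 = x1"
  "(vector [x1, x2, x3, x4, x5, x6] :: 'a::zero^6) $ 2 = x2"
  "(vector [x1, x2, x3, x4, x5, x6] :: 'a::zero^6) $ 3 = x3"
  "(vector [x1, x2, x3, x4, x5, x6] :: 'a::zero^6) $ 4 = x4"
  "(vector [x1, x2, x3, x4, x5, x6] :: 'a::zero^6) $ 5 = x5"
  "(vector [x1, x2, x3, x4, x5, x6] :: 'a::zero^6) $ 6 = x6"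
  unfolding vector_def by simp_all

lemma vector_8 [simp]:
  "(vector [x1, x2, x3, x4, x5, x6, x7, x8] :: 'a::zero^8) $ 1 = x1"
  "(vector [x1, x2, x3, x4, x5, x6, x7, x8] :: 'a::zero^8) $ 2 = x2"
  "(vector [x1, x2, x3, x4, x5, x6, x7, x8] :: 'a::zero^8) $ 3 = x3"
  "(vector [x1, x2, x3, x4, x5, x6, x7, x8] :: 'a::zero^8) $ 4 = x4"
  "(vector [x1, x2, x3, x4, x5, x6, x7, x8] :: 'a::zero^8) $ 5 = x5"
  "(vector [x1, x2, x3, x4, x5, x6, x7, x8] :: 'a::zero^8) $ 6 = x6"
  "(vector [x1, x2, x3, x4, x5, x6, x7, x8] :: 'a::zero^8) $ 7 = x7"
  "(vector [x1, x2, x3, x4, x5, x6, x7, x8] :: 'a::zero^8) $ 8 = x8"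
  unfolding vector_def by simp_all

lemma has_vector_derivative_vec_iff:
  fixes f :: "real \<Rightarrow> real^'n"
  shows "(f has_vector_derivative v) (at t) \<longleftrightarrow>
    (\<forall>i. ((\<lambda>s. f s $ i) has_real_derivative v $ i) (at t))"
proof -
  have "(\<lambda>x. x * c) = (*) c" for c :: real
    by (auto simp: mult.commute)
  then show ?thesis
    unfolding has_vector_derivative_def has_field_derivative_def
    by (subst has_derivative_componentwise_within) (simp add: Basis_vec_def cart_eq_inner_axis[symmetric])
qed

lemma pinv_mult_self:
  fixes A :: "real^'n^'m"
  assumes kernel: "\<And>x. A *v x = 0 \<Longrightarrow> x = 0"
  shows "pinv A ** A = mat 1"
proof -
  define M where "M = transpose A ** A"
  have "x = 0" if "M *v x = 0" for x
  proof -
    have "(A *v x) \<bullet> (A *v x) = x \<bullet> (M *v x)"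
      by (simp add: M_def matrix_vector_mul_assoc[symmetric] dot_lmul_matrix[symmetric] inner_commute)
    then show "x = 0"
      using that kernel by simp
  qed
  then have "inj ((*v) M)"
    by (simp add: linear_injective_0 matrix_vector_mul_linear)
  then have "invertible M"
    by (simp add: invertible_left_inverse matrix_left_invertible_injective[symmetric])
  then have "matrix_inv M ** M = mat 1"
    unfolding matrix_inv_def invertible_def by (rule someI_ex[THEN conjunct2])
  then show ?thesis
    by (simp add: pinv_def M_def matrix_mul_assoc)
qed

section \<open>Real analysis\<close>

definition sinc :: "real \<Rightarrow> real" where
  "sinc x = (if x = 0 then 1 else sin x / x)"

lemma sinc_mult: "sinc x * x = sin x"
  by (simp add: sinc_def)

lemma sinc_pos: "0 \<le> x \<Longrightarrow> x < pi \<Longrightarrow> 0 < sinc x"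
  by (simp add: sinc_def sin_gt_zero)

lemma isCont_sinc_0: "isCont sinc 0"
proof -
  have "((\<lambda>y::real. (sin y - sin 0) / (y - 0)) \<longlongrightarrow> 1) (at 0)"
    using DERIV_sin[of 0] by (simp add: has_field_derivative_iff)
  then have "(sinc \<longlongrightarrow> 1) (at 0)"
    by (rule Lim_transform_eventually) (auto simp: eventually_at_filter sinc_def)
  then show ?thesis
    by (simp add: isCont_def sinc_def)
qed

lemma DERIV_sinc:
  assumes "x \<noteq> 0"
  shows "(sinc has_real_derivative (cos x - sinc x) / x) (at x)"
proof (rule has_field_derivative_transform_within_open[where S = "- {0}"])
  show "((\<lambda>y. sin y / y) has_real_derivative (cos x - sinc x) / x) (at x)"
    using assms by (auto intro!: derivative_eq_intros simp: sinc_def field_simps power2_eq_square)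
qed (use assms in \<open>auto simp: sinc_def\<close>)

lemma abs_cos_minus_one_le: "\<bar>cos x - 1\<bar> \<le> (x::real)\<^sup>2 / 2"
proof -
  have "(sin (x / 2))\<^sup>2 \<le> (x / 2)\<^sup>2"
    using abs_sin_x_le_abs_x[of "x / 2"] by (metis abs_ge_zero power2_abs power_mono)
  then show ?thesis
    using cos_double_sin[of "x / 2"] by (simp add: power_divide)
qed

lemma DERIV_zero_if_bounded:
  fixes f h :: "real \<Rightarrow> real"
  assumes "(h has_real_derivative 0) (at t)" and "h t = 0" and bound: "\<And>s. \<bar>f s - f t\<bar> \<le> h s"
  shows "(f has_real_derivative 0) (at t)"
proof -
  have "((\<lambda>s. \<bar>(h s - h t) / (s - t)\<bar>) \<longlongrightarrow> 0) (at t)"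
    using assms(1) tendsto_rabs by (fastforce simp: has_field_derivative_iff)
  then have "((\<lambda>s. (f s - f t) / (s - t)) \<longlongrightarrow> 0) (at t)"
  proof (rule Lim_null_comparison[rotated], intro always_eventually allI)
    fix s
    have "\<bar>f s - f t\<bar> \<le> \<bar>h s - h t\<bar>"
      using bound[of s] \<open>h t = 0\<close> by simp
    then show "norm ((f s - f t) / (s - t)) \<le> \<bar>(h s - h t) / (s - t)\<bar>"
      by (simp add: abs_divide divide_right_mono)
  qed
  then show ?thesis
    by (simp add: has_field_derivative_iff)
qed

lemma DERIV_continuous_mult_vanishing:
  fixes c g :: "real \<Rightarrow> real"
  assumes "isCont c t" and "g t = 0" and "(g has_real_derivative d) (at t)"
  shows "((\<lambda>s. c s * g s) has_real_derivative c t * d) (at t)"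
proof -
  obtain l where l: "\<forall>z. g z - g t = l z * (z - t)" "isCont l t" "l t = d"
    using assms(3) DERIV_caratheodory_within[of g d t UNIV] by auto
  show ?thesis
    unfolding DERIV_caratheodory_within[of _ _ t UNIV]
  proof (intro exI conjI allI)
    show "c z * g z - c t * g t = (c z * l z) * (z - t)" for z
      using l(1) \<open>g t = 0\<close> by simp
    show "continuous (at t) (\<lambda>z. c z * l z)"
      using assms(1) l(2) by (simp add: continuous_mult)
  qed (simp add: l)
qed

lemma has_vector_derivative_continuous_scaleR_vanishing:
  fixes c :: "real \<Rightarrow> real" and g :: "real \<Rightarrow> real^'n"
  assumes "isCont c t" and "g t = 0" and "(g has_vector_derivative d) (at t)"
  shows "((\<lambda>s. c s *\<^sub>R g s) has_vector_derivative c t *\<^sub>R d) (at t)"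
proof -
  have "((\<lambda>s. c s * g s $ i) has_real_derivative c t * d $ i) (at t)" for i
    using assms(2,3)
    by (intro DERIV_continuous_mult_vanishing[OF assms(1)]) (simp_all add: has_vector_derivative_vec_iff)
  then show ?thesis
    by (simp add: has_vector_derivative_vec_iff)
qed

section \<open>Quaternions\<close>

lemma qmk_nth [simp]:
  "qmk a b c d $ 1 = a" "qmk a b c d $ 2 = b" "qmk a b c d $ 3 = c" "qmk a b c d $ 4 = d"
  by (simp_all add: qmk_def)

lemma quat_eq_iff: "(h::quat) = g \<longleftrightarrow> h$1 = g$1 \<and> h$2 = g$2 \<and> h$3 = g$3 \<and> h$4 = g$4"
  by (auto simp: vec_eq_iff forall_4)

definition vec3 :: "quat \<Rightarrow> real^3" where
  "vec3 h = vector [h$2, h$3, h$4]"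

lemma vec3_nth [simp]: "vec3 h $ 1 = h$2" "vec3 h $ 2 = h$3" "vec3 h $ 3 = h$4"
  by (simp_all add: vec3_def)

lemma vec3_zero [simp]: "vec3 0 = 0"
  by (simp add: vec_eq_iff forall_3)

lemma vec3_scaleR [simp]: "vec3 (c *\<^sub>R h) = c *\<^sub>R vec3 h"
  by (simp add: vec_eq_iff forall_3)

lemma Qp_mult_vec: "Qp *v v = qmk 0 (v$1) (v$2) (v$3)"
  by (simp add: quat_eq_iff Qp_def matrix_vector_mult_def sum_3)

lemma vec3_Qp_mult_vec [simp]: "vec3 (Qp *v v) = v"
  by (simp add: vec_eq_iff forall_3 Qp_mult_vec)

lemma Qp_mult_vec3: "is_pure h \<Longrightarrow> Qp *v vec3 h = h"
  by (simp add: quat_eq_iff Qp_mult_vec is_pure_def)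

lemma quat_scalar_vector_decomp: "h = h$1 *\<^sub>R qmk 1 0 0 0 + Qp *v vec3 h"
  by (simp add: quat_eq_iff Qp_mult_vec)

lemma scaleR_plus_Qp_mult_vec_eq_0_iff:
  "a *\<^sub>R qmk 1 0 0 0 + Qp *v v = 0 \<longleftrightarrow> a = 0 \<and> v = 0"
  by (auto simp: quat_eq_iff Qp_mult_vec vec_eq_iff forall_3)

lemma norm_quat_sq: "(norm (h::quat))\<^sup>2 = (h$1)\<^sup>2 + (h$2)\<^sup>2 + (h$3)\<^sup>2 + (h$4)\<^sup>2"
  unfolding power2_norm_eq_inner by (simp add: inner_vec_def sum_4 power2_eq_square)

lemma norm_vec3_sq: "(norm (vec3 h))\<^sup>2 = (h$2)\<^sup>2 + (h$3)\<^sup>2 + (h$4)\<^sup>2"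
  unfolding power2_norm_eq_inner by (simp add: inner_vec_def sum_3 power2_eq_square)

lemma Hplus4_mult_vec: "Hplus4 h *v g = qmult h g"
  by (simp add: quat_eq_iff Hplus4_def qmult_def matrix_vector_mult_def sum_4)

lemma Hminus4_mult_vec: "Hminus4 g *v h = qmult h g"
  by (simp add: quat_eq_iff Hminus4_def qmult_def matrix_vector_mult_def sum_4 algebra_simps)

lemma bounded_bilinear_qmult: "bounded_bilinear qmult"
  unfolding bilinear_conv_bounded_bilinear[symmetric] bilinear_def
  by (simp add: linear_iff quat_eq_iff qmult_def algebra_simps)

lemma qmult_scaleR_left: "qmult (c *\<^sub>R h) g = c *\<^sub>R qmult h g"
  by (rule bounded_bilinear.scaleR_left[OF bounded_bilinear_qmult])

lemma qmult_qconj_right: "qmult (qmult h r) (qconj r) = (norm r)\<^sup>2 *\<^sub>R h"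
  unfolding norm_quat_sq by (simp add: quat_eq_iff qmult_def qconj_def power2_eq_square algebra_simps)

lemma qmult_unit_eq_0_iff: "is_unit_quat r \<Longrightarrow> qmult h r = 0 \<longleftrightarrow> h = 0"
  by (metis is_unit_quat_def qmult_qconj_right bounded_bilinear.zero_left[OF bounded_bilinear_qmult]
      bounded_bilinear.zero_right[OF bounded_bilinear_qmult] power_one scale_one)

section \<open>Angle and logarithm of a unit quaternion\<close>

lemma unit_quat_sq: "is_unit_quat r \<Longrightarrow> (r$1)\<^sup>2 + (norm (vec3 r))\<^sup>2 = 1"
  using norm_quat_sq[of r] by (simp add: is_unit_quat_def norm_vec3_sq add.assoc)

lemma unit_quat_angle:
  assumes unit: "is_unit_quat r" and not_minus_one: "r \<noteq> qmk (-1) 0 0 0"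
  shows "0 \<le> arccos (r$1)" "arccos (r$1) < pi"
    "cos (arccos (r$1)) = r$1" "sin (arccos (r$1)) = norm (vec3 r)"
proof -
  have sq: "(r$1)\<^sup>2 + (norm (vec3 r))\<^sup>2 = 1"
    using unit_quat_sq[OF unit] .
  then have "\<bar>r$1\<bar> \<le> 1"
    by (metis abs_square_le_1 le_add_same_cancel1 zero_le_power2)
  moreover have "r$1 \<noteq> -1"
  proof
    assume "r$1 = -1"
    then have "vec3 r = 0"
      using sq by simp
    then show False
      using not_minus_one \<open>r$1 = -1\<close> by (simp add: quat_eq_iff vec_eq_iff forall_3)
  qed
  ultimately have bounds: "-1 < r$1" "r$1 \<le> 1"
    by auto
  show "0 \<le> arccos (r$1)" "cos (arccos (r$1)) = r$1"
    using bounds by (simp_all add: arccos_lbound)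
  show "arccos (r$1) < pi"
    using arccos_less_arccos[of "-1" "r$1"] bounds by simp
  have "1 - (r$1)\<^sup>2 = (norm (vec3 r))\<^sup>2"
    using sq by simp
  then have "sin (arccos (r$1)) = sqrt ((norm (vec3 r))\<^sup>2)"
    using bounds by (simp add: sin_arccos)
  then show "sin (arccos (r$1)) = norm (vec3 r)"
    by simp
qed

lemma unit_quat_angle_eq_0_iff:
  assumes "is_unit_quat r" and "r \<noteq> qmk (-1) 0 0 0"
  shows "arccos (r$1) = 0 \<longleftrightarrow> vec3 r = 0"
  using unit_quat_angle[OF assms] sin_eq_0_pi[of "arccos (r$1)"] by force

lemma vec3_qaxis: "vec3 r \<noteq> 0 \<Longrightarrow> vec3 (qaxis r) = sgn (vec3 r)"
proof -
  assume "vec3 r \<noteq> 0"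
  moreover have "vec3 (qmk 0 (r$2) (r$3) (r$4)) = vec3 r"
    by (simp add: vec_eq_iff forall_3)
  moreover have "norm (qmk 0 (r$2) (r$3) (r$4)) = norm (vec3 r)"
    using norm_quat_sq[of "qmk 0 (r$2) (r$3) (r$4)"] norm_vec3_sq[of r]
    by (metis norm_ge_zero power2_eq_iff_nonneg qmk_nth zero_power2 add_0)
  ultimately show ?thesis
    by (auto simp: qaxis_def Let_def sgn_div_norm divide_inverse_commute)
qed

lemma vec3_qlog:
  assumes "is_unit_quat r" and "r \<noteq> qmk (-1) 0 0 0"
  shows "vec3 (qlog r) = arccos (r$1) *\<^sub>R sgn (vec3 r)"
  using unit_quat_angle_eq_0_iff[OF assms]
  by (cases "vec3 r = 0") (simp_all add: qlog_def qphi_def vec3_qaxis)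

lemma norm_vec3_qlog:
  assumes "is_unit_quat r" and "r \<noteq> qmk (-1) 0 0 0"
  shows "norm (vec3 (qlog r)) = arccos (r$1)"
  using unit_quat_angle_eq_0_iff[OF assms] unit_quat_angle(1)[OF assms]
  by (simp add: vec3_qlog[OF assms] norm_sgn)

lemma sgn_vec3_qlog:
  assumes "is_unit_quat r" and "r \<noteq> qmk (-1) 0 0 0"
  shows "sgn (vec3 (qlog r)) = sgn (vec3 r)"
  using unit_quat_angle_eq_0_iff[OF assms] unit_quat_angle(1)[OF assms]
  by (cases "vec3 r = 0") (simp_all add: vec3_qlog[OF assms] sgn_div_norm norm_sgn field_simps)

section \<open>The exponential map and its derivative\<close>

definition qexp :: "real^3 \<Rightarrow> quat" where
  "qexp y = cos (norm y) *\<^sub>R qmk 1 0 0 0 + Qp *v (sinc (norm y) *\<^sub>R y)"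

lemma qexp_vec3_qlog:
  assumes "is_unit_quat r" and "r \<noteq> qmk (-1) 0 0 0"
  shows "qexp (vec3 (qlog r)) = r"
proof -
  define a where "a = arccos (r$1)"
  have "sinc a *\<^sub>R vec3 (qlog r) = sin a *\<^sub>R sgn (vec3 r)"
    by (simp add: vec3_qlog[OF assms] a_def sinc_mult)
  also have "\<dots> = vec3 r"
    using unit_quat_angle(4)[OF assms] by (cases "vec3 r = 0") (simp_all add: a_def sgn_div_norm)
  finally show ?thesis
    using quat_scalar_vector_decomp[of r] unit_quat_angle(3)[OF assms]
    by (simp add: qexp_def norm_vec3_qlog[OF assms] a_def)
qed

text \<open>At y = 0 the junk value sgn 0 = 0 makes this Qp *v e, which is the correct derivative there.\<close>
definition qexp_derivative :: "real^3 \<Rightarrow> real^3 \<Rightarrow> quat" where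
  "qexp_derivative y e =
    (let \<theta> = norm y; n = sgn y in
     (- sin \<theta> * (n \<bullet> e)) *\<^sub>R qmk 1 0 0 0 + Qp *v (sinc \<theta> *\<^sub>R e + ((cos \<theta> - sinc \<theta>) * (n \<bullet> e)) *\<^sub>R n))"

lemma has_vector_derivative_qexp_at_zero:
  assumes w: "(w has_vector_derivative e) (at t)" and zero: "w t = 0"
  shows "((\<lambda>s. qexp (w s)) has_vector_derivative qexp_derivative (w t) e) (at t)"
proof -
  have "((\<lambda>s. w s \<bullet> w s) has_vector_derivative w t \<bullet> e + e \<bullet> w t) (at t)"
    using bounded_bilinear.has_vector_derivative[OF bounded_bilinear_inner w w] .
  then have "((\<lambda>s. (norm (w s))\<^sup>2 / 2) has_real_derivative 0) (at t)"
    using zero by (auto intro!: derivative_eq_intros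
        simp: power2_norm_eq_inner has_real_derivative_iff_has_vector_derivative[symmetric])
  then have cos: "((\<lambda>s. cos (norm (w s))) has_real_derivative 0) (at t)"
    by (rule DERIV_zero_if_bounded) (use zero abs_cos_minus_one_le in auto)
  have "isCont (\<lambda>s. norm (w s)) t"
    using has_vector_derivative_continuous[OF w] by simp
  then have "isCont (\<lambda>s. sinc (norm (w s))) t"
    by (rule isCont_o2) (simp add: zero isCont_sinc_0)
  then have "((\<lambda>s. sinc (norm (w s)) *\<^sub>R w s) has_vector_derivative e) (at t)"
    using has_vector_derivative_continuous_scaleR_vanishing[OF _ zero w] zero
    by (fastforce simp: sinc_def)
  then show ?thesis
    unfolding qexp_def
    by (rule has_vector_derivative_eq_rhs[OF has_vector_derivative_add[OF
          has_vector_derivative_scaleR[OF cos has_vector_derivative_const]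
          bounded_linear.has_vector_derivative[OF matrix_vector_mul_bounded_linear]]])
      (simp add: qexp_derivative_def zero sinc_def)
qed

lemma has_vector_derivative_qexp_at_nonzero:
  assumes w: "(w has_vector_derivative e) (at t)" and nonzero: "w t \<noteq> 0"
  shows "((\<lambda>s. qexp (w s)) has_vector_derivative qexp_derivative (w t) e) (at t)"
proof -
  define \<theta> where "\<theta> = norm (w t)"
  define n where "n = sgn (w t)"
  have "\<theta> \<noteq> 0"
    using nonzero by (simp add: \<theta>_def)
  then have w_t: "(c / \<theta>) *\<^sub>R w t = c *\<^sub>R n" for c
    by (simp add: \<theta>_def n_def sgn_div_norm divide_inverse)
  have "((\<lambda>s. norm (w s)) has_derivative (\<lambda>h. (h *\<^sub>R e) \<bullet> n)) (at t)"
    using has_derivative_compose[OF w[unfolded has_vector_derivative_def] has_derivative_norm[OF nonzero]]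
    by (simp add: n_def)
  then have norm: "((\<lambda>s. norm (w s)) has_real_derivative n \<bullet> e) (at t)"
    by (rule has_derivative_imp_has_field_derivative) (simp add: inner_commute)
  have cos: "((\<lambda>s. cos (norm (w s))) has_real_derivative - sin \<theta> * (n \<bullet> e)) (at t)"
    using DERIV_chain2[OF DERIV_cos norm] by (simp add: \<theta>_def)
  have sinc: "((\<lambda>s. sinc (norm (w s))) has_real_derivative (cos \<theta> - sinc \<theta>) / \<theta> * (n \<bullet> e)) (at t)"
    using DERIV_chain2[OF DERIV_sinc[OF \<open>\<theta> \<noteq> 0\<close>, unfolded \<theta>_def] norm] by (simp add: \<theta>_def)
  show ?thesis
    unfolding qexp_def
    by (rule has_vector_derivative_eq_rhs[OF has_vector_derivative_add[OF
          has_vector_derivative_scaleR[OF cos has_vector_derivative_const]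
          bounded_linear.has_vector_derivative[OF matrix_vector_mul_bounded_linear
            has_vector_derivative_scaleR[OF sinc w]]]])
      (simp add: qexp_derivative_def w_t \<theta>_def[symmetric] n_def[symmetric])
qed

lemma has_vector_derivative_qexp:
  "(w has_vector_derivative e) (at t) \<Longrightarrow>
    ((\<lambda>s. qexp (w s)) has_vector_derivative qexp_derivative (w t) e) (at t)"
  using has_vector_derivative_qexp_at_zero has_vector_derivative_qexp_at_nonzero by blast

lemma qexp_derivative_eq_0_iff:
  assumes "norm y < pi"
  shows "qexp_derivative y e = 0 \<longleftrightarrow> e = 0"
proof
  assume zero: "qexp_derivative y e = 0"
  define \<theta> where "\<theta> = norm y"
  define n where "n = sgn y"
  have scalar: "sin \<theta> * (n \<bullet> e) = 0"
    and vector: "sinc \<theta> *\<^sub>R e + ((cos \<theta> - sinc \<theta>) * (n \<bullet> e)) *\<^sub>R n = 0"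
    using zero
    unfolding qexp_derivative_def Let_def scaleR_plus_Qp_mult_vec_eq_0_iff \<theta>_def n_def
    by simp_all
  show "e = 0"
  proof (cases "y = 0")
    case True
    then show ?thesis
      using vector by (simp add: \<theta>_def n_def sinc_def)
  next
    case False
    then have "0 < \<theta>" "\<theta> < pi"
      using assms by (simp_all add: \<theta>_def)
    then have "n \<bullet> e = 0"
      using scalar sin_gt_zero by force
    moreover have "0 < sinc \<theta>"
      using \<open>0 < \<theta>\<close> \<open>\<theta> < pi\<close> by (simp add: sinc_pos)
    ultimately show ?thesis
      using vector by simp
  qed
qed (simp add: qexp_derivative_def)

lemma Qr_mult_vec:
  "Qr r *v e = (- (vec3 r \<bullet> e)) *\<^sub>R qmk 1 0 0 0 +
     Qp *v (Theta r *\<^sub>R e + (Gamma r * (vec3 (qaxis r) \<bullet> e)) *\<^sub>R vec3 (qaxis r))"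
  unfolding Qp_mult_vec
  by (simp add: quat_eq_iff Qr_def Let_def matrix_vector_mult_def sum_3 inner_vec_def algebra_simps)

lemma Qr_mult_vec_eq_qexp_derivative:
  assumes "is_unit_quat r" and "r \<noteq> qmk (-1) 0 0 0"
  shows "Qr r *v e = qexp_derivative (vec3 (qlog r)) e"
proof -
  define a where "a = arccos (r$1)"
  have Theta: "Theta r = sinc a"
    by (simp add: Theta_def qphi_def sinc_def a_def)
  have Gamma: "Gamma r = cos a - sinc a"
    by (simp add: Gamma_def Theta unit_quat_angle(3)[OF assms] a_def)
  show ?thesis
  proof (cases "vec3 r = 0")
    case True
    then have "a = 0"
      using unit_quat_angle_eq_0_iff[OF assms] by (simp add: a_def)
    moreover have "vec3 (qlog r) = 0"
      using True by (simp add: vec3_qlog[OF assms])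
    \<comment> \<open>the arbitrary axis chosen by qaxis is annihilated by Gamma r = 0\<close>
    ultimately show ?thesis
      using True by (simp add: Qr_mult_vec qexp_derivative_def Theta Gamma sinc_def)
  next
    case False
    have "vec3 r \<bullet> e = sin a * (sgn (vec3 r) \<bullet> e)"
      using False unit_quat_angle(4)[OF assms] by (simp add: a_def sgn_div_norm)
    then show ?thesis
      using False
      by (simp add: Qr_mult_vec Let_def qexp_derivative_def norm_vec3_qlog[OF assms] sgn_vec3_qlog[OF assms]
          vec3_qaxis Theta Gamma a_def[symmetric])
  qed
qed

lemma Qr_mult_vec_eq_0_iff:
  assumes "is_unit_quat r" and "r \<noteq> qmk (-1) 0 0 0"
  shows "Qr r *v e = 0 \<longleftrightarrow> e = 0"
  using qexp_derivative_eq_0_iff unit_quat_angle(2)[OF assms]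
  by (simp add: Qr_mult_vec_eq_qexp_derivative[OF assms] norm_vec3_qlog[OF assms])

lemma unit_quat_has_vector_derivative:
  assumes unit: "\<And>s. is_unit_quat (r s)" and not_minus_one: "\<And>s. r s \<noteq> qmk (-1) 0 0 0"
    and log: "((\<lambda>s. vec3 (qlog (r s))) has_vector_derivative e) (at t)"
  shows "(r has_vector_derivative Qr (r t) *v e) (at t)"
proof -
  have "((\<lambda>s. qexp (vec3 (qlog (r s)))) has_vector_derivative Qr (r t) *v e) (at t)"
    using has_vector_derivative_qexp[OF log]
    by (simp add: Qr_mult_vec_eq_qexp_derivative[OF unit not_minus_one])
  then show ?thesis
    by (simp add: qexp_vec3_qlog[OF unit not_minus_one])
qed

section \<open>Dual quaternions and the matrix Q8\<close>

definition upper3 :: "real^6 \<Rightarrow> real^3" where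
  "upper3 v = vector [v$1, v$2, v$3]"

definition lower3 :: "real^6 \<Rightarrow> real^3" where
  "lower3 v = vector [v$4, v$5, v$6]"

lemma upper3_vec6 [simp]: "upper3 (vec6 x) = vec3 (fst x)"
  by (simp add: upper3_def vec6_def vec3_def)

lemma lower3_vec6 [simp]: "lower3 (vec6 x) = vec3 (snd x)"
  by (simp add: lower3_def vec6_def vec3_def)

lemma upper3_lower3_eq_0_iff: "upper3 v = 0 \<and> lower3 v = 0 \<longleftrightarrow> v = 0"
  by (auto simp: upper3_def lower3_def vec_eq_iff forall_3 forall_6)

lemma bounded_linear_upper3: "bounded_linear upper3"
  unfolding linear_conv_bounded_linear[symmetric]
  by (simp add: linear_iff upper3_def vec_eq_iff forall_3)

lemma bounded_linear_lower3: "bounded_linear lower3"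
  unfolding linear_conv_bounded_linear[symmetric]
  by (simp add: linear_iff lower3_def vec_eq_iff forall_3)

lemma bounded_linear_vec8: "bounded_linear vec8"
  unfolding linear_conv_bounded_linear[symmetric]
  by (simp add: linear_iff vec8_def vec_eq_iff forall_8)

lemma vec8_eq_0_iff: "vec8 x = 0 \<longleftrightarrow> x = 0"
  by (auto simp: vec8_def vec_eq_iff forall_8 forall_4 prod_eq_iff)

lemma block2x2_mult_vec:
  "block2x2 A B C D *v v = vec8 (A *v upper3 v + B *v lower3 v, C *v upper3 v + D *v lower3 v)"
  by (simp add: vec_eq_iff forall_8 block2x2_def blk_row_def vec8_def matrix_vector_mult_def
      sum_6 sum_3 upper3_def lower3_def)

lemma recover_translation_dq_of:
  "is_unit_quat r \<Longrightarrow> 2 *\<^sub>R qmult ((1/2) *\<^sub>R qmult p r) (qconj r) = p"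
  by (simp add: qmult_scaleR_left qmult_qconj_right is_unit_quat_def)

lemma dq_log_dq_of: "is_unit_quat r \<Longrightarrow> dq_log (dq_of r p) = (qlog r, (1/2) *\<^sub>R p)"
  by (simp add: dq_log_def dq_of_def recover_translation_dq_of)

lemma has_vector_derivative_vec8_dq_of:
  assumes "(r has_vector_derivative r') (at t)" and "(p has_vector_derivative p') (at t)"
  shows "((\<lambda>s. vec8 (dq_of (r s) (p s))) has_vector_derivative
    vec8 (r', (1/2) *\<^sub>R (qmult (p t) r' + qmult p' (r t)))) (at t)"
  unfolding dq_of_def
  by (intro bounded_linear.has_vector_derivative[OF bounded_linear_vec8] has_vector_derivative_Pair assms
      bounded_linear.has_vector_derivative[OF bounded_linear_scaleR_right]
      bounded_bilinear.has_vector_derivative[OF bounded_bilinear_qmult])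

lemma Q8_dq_of_mult_vec:
  assumes "is_unit_quat r"
  shows "Q8 (dq_of r p) *v v =
    vec8 (Qr r *v upper3 v, (1/2) *\<^sub>R qmult p (Qr r *v upper3 v) + qmult (Qp *v lower3 v) r)"
  using assms
  by (simp add: Q8_def dq_of_def recover_translation_dq_of block2x2_mult_vec scaleR_matrix_vector_assoc[symmetric]
      matrix_vector_mul_assoc[symmetric] Hplus4_mult_vec Hminus4_mult_vec)

lemma Q8_dq_of_mult_vec_eq_0_iff:
  assumes unit: "is_unit_quat r" and not_minus_one: "r \<noteq> qmk (-1) 0 0 0"
  shows "Q8 (dq_of r p) *v v = 0 \<longleftrightarrow> v = 0"
proof
  assume "Q8 (dq_of r p) *v v = 0"
  then have "Qr r *v upper3 v = 0" and "qmult (Qp *v lower3 v) r = 0"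
    by (auto simp: Q8_dq_of_mult_vec[OF unit] vec8_eq_0_iff zero_prod_def
        bounded_bilinear.zero_right[OF bounded_bilinear_qmult])
  then have "upper3 v = 0" and "Qp *v lower3 v = 0"
    by (simp_all add: Qr_mult_vec_eq_0_iff[OF unit not_minus_one] qmult_unit_eq_0_iff[OF unit])
  then have "upper3 v = 0 \<and> lower3 v = 0"
    by (metis vec3_Qp_mult_vec vec3_zero)
  then show "v = 0"
    by (simp add: upper3_lower3_eq_0_iff)
qed simp

theorem theorem4:
  fixes r p :: "real \<Rightarrow> quat" and t :: real and ydot :: "real^6"
  assumes unit: "\<And>s. is_unit_quat (r s)"
    and pure: "\<And>s. is_pure (p s)"
    and phi_range: "\<And>s. r s \<noteq> qmk (-1) 0 0 0"
    and ydiff: "((\<lambda>s. vec6 (dq_log (dq_of (r s) (p s)))) has_vector_derivative ydot) (at t)"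
  shows "((\<lambda>s. vec8 (dq_of (r s) (p s))) has_vector_derivative
            (Q8 (dq_of (r t) (p t)) *v ydot)) (at t)
       \<and> rank (Q8 (dq_of (r t) (p t))) = 6
       \<and> pinv (Q8 (dq_of (r t) (p t))) ** Q8 (dq_of (r t) (p t)) = mat 1
       \<and> (Q8 (dq_of (r t) (p t)) *v ydot = 0 \<longleftrightarrow> ydot = 0)"
proof -
  have log: "((\<lambda>s. vec3 (qlog (r s))) has_vector_derivative upper3 ydot) (at t)"
    using bounded_linear.has_vector_derivative[OF bounded_linear_upper3 ydiff]
    by (simp add: dq_log_dq_of[OF unit])
  have "((\<lambda>s. Qp *v (2 *\<^sub>R lower3 (vec6 (dq_log (dq_of (r s) (p s)))))) has_vector_derivative
      Qp *v (2 *\<^sub>R lower3 ydot)) (at t)"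
    by (intro bounded_linear.has_vector_derivative[OF matrix_vector_mul_bounded_linear]
        bounded_linear.has_vector_derivative[OF bounded_linear_scaleR_right]
        bounded_linear.has_vector_derivative[OF bounded_linear_lower3] ydiff)
  then have p': "(p has_vector_derivative 2 *\<^sub>R (Qp *v lower3 ydot)) (at t)"
    by (simp add: dq_log_dq_of[OF unit] Qp_mult_vec3[OF pure] matrix_vector_mult_scaleR)
  have r': "(r has_vector_derivative Qr (r t) *v upper3 ydot) (at t)"
    by (rule unit_quat_has_vector_derivative[OF unit phi_range log])
  have deriv: "((\<lambda>s. vec8 (dq_of (r s) (p s))) has_vector_derivative
      Q8 (dq_of (r t) (p t)) *v ydot) (at t)"
    using has_vector_derivative_vec8_dq_of[OF r' p']
    by (simp add: Q8_dq_of_mult_vec[OF unit] qmult_scaleR_left scaleR_right_distrib)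
  have kernel: "Q8 (dq_of (r t) (p t)) *v v = 0 \<longleftrightarrow> v = 0" for v
    by (rule Q8_dq_of_mult_vec_eq_0_iff[OF unit phi_range])
  then have "inj ((*v) (Q8 (dq_of (r t) (p t))))"
    by (simp add: linear_injective_0 matrix_vector_mul_linear)
  then show ?thesis
    using deriv kernel pinv_mult_self full_rank_injective by auto
qed

end
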